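(* Let $\alpha\in\mathcal{P}(n)$ with $\delta(\alpha)=(d_k)_{k\ge1}$. Then for every $k\ge1$: (1) $d_{k+1}-d_k\le1$, with equality if and only if $d_j=j$ for all $1\le j\le k+1$; (2) if $d_k\ge d_{k+1}$, then $d_{k+1}\ge d_{k+2}$.
   Context: A partition of a positive integer $n$ is a finite non-increasing sequence $\alpha=(\alpha_1,\dots,\alpha_l)$ of positive integers with sum $n$; $\mathcal{P}(n)$ is the set of partitions of $n$, and $\alpha_i=0$ for $i>l$. The diagonal sequence of $\alpha$ is $\delta(\alpha)=(d_k)_{k\ge1}$ with $d_k=|\{i:1\le i\le k,\ \alpha_i+i-1\ge k\}|$. *)

theory Defs
  imports Main
begin

definition partitions :: "nat \<Rightarrow> nat list set" where
  "partitions n = {a. sorted_wrt (\<ge>) a \<and> (\<forall>x\<in>set a. 0 < x) \<and> sum_list a = n}"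

definition part :: "nat list \<Rightarrow> nat \<Rightarrow> nat" where
  "part a i = (if 1 \<le> i \<and> i \<le> length a then a ! (i - 1) else 0)"

definition diag :: "nat list \<Rightarrow> nat \<Rightarrow> nat" where
  "diag a k = card {i. 1 \<le> i \<and> i \<le> k \<and> part a i + i - 1 \<ge> k}"

end

theory Submission
  imports Defs
begin

text \<open>Put \<open>r i = \<alpha>\<^sub>i + i - 1\<close>, so that \<open>d k\<close> counts the \<open>i \<le> k\<close> with \<open>r i \<ge> k\<close>. Since the parts
  are non-increasing, \<open>r (i + 1) \<le> r i + 1\<close>, and this is all that is used. Passing from \<open>k\<close> to
  \<open>k + 1\<close>, the count loses the \<open>i\<close> with \<open>r i = k\<close> and gains \<open>k + 1\<close> iff \<open>r (k + 1) > k\<close>.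
  A jump by one therefore means \<open>r (k + 1) > k\<close> while no \<open>r i\<close> equals \<open>k\<close>; walking down from
  \<open>k + 1\<close>, \<open>r\<close> decreases by at most one per step, so it stays above \<open>k\<close>. For (2), a rise
  from \<open>d (k + 1)\<close> to \<open>d (k + 2)\<close> needs \<open>r (k + 1) > k\<close>, so \<open>d (k + 1) \<le> d k\<close> supplies an
  \<open>i\<close> with \<open>r i = k\<close>; climbing from there to \<open>k + 1\<close>, \<open>r\<close> must hit \<open>k + 1\<close>, which the
  count at \<open>k + 2\<close> loses.\<close>

definition reach_count :: "(nat \<Rightarrow> nat) \<Rightarrow> nat \<Rightarrow> nat" where
  "reach_count f k = card {i. 1 \<le> i \<and> i \<le> k \<and> k \<le> f i}"

lemma diag_eq_reach_count: "diag a = reach_count (\<lambda>i. part a i + i - 1)"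
  by (simp add: fun_eq_iff diag_def reach_count_def)

lemma part_Suc_le:
  assumes "sorted_wrt (\<ge>) a" "1 \<le> i"
  shows "part a (Suc i) \<le> part a i"
proof (cases "Suc i \<le> length a")
  case True
  then have "a ! i \<le> a ! (i - 1)"
    using sorted_wrt_nth_less[OF assms(1), of "i - 1" i] assms(2) by simp
  then show ?thesis using True assms(2) by (simp add: part_def)
qed (simp add: part_def)

lemma nat_intermed_val_Suc_le:
  fixes f :: "nat \<Rightarrow> nat"
  assumes step: "\<And>x. i \<le> x \<Longrightarrow> f (Suc x) \<le> Suc (f x)"
    and "i \<le> m" "f i \<le> t" "t \<le> f m"
  shows "\<exists>j. i \<le> j \<and> j \<le> m \<and> f j = t"
  using \<open>i \<le> m\<close> \<open>t \<le> f m\<close>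
proof (induction m rule: dec_induct)
  case base
  then show ?case using \<open>f i \<le> t\<close> by auto
next
  case (step n)
  show ?case
  proof (cases "t \<le> f n")
    case True
    then show ?thesis using step.IH by (auto intro: le_SucI)
  next
    case False
    then have "f (Suc n) = t" using step.prems assms(1)[OF step.hyps(1)] by simp
    then show ?thesis using step.hyps(1) le_SucI by blast
  qed
qed

lemma reach_count_Suc:
  "reach_count f (Suc k) + card {i. 1 \<le> i \<and> i \<le> k \<and> f i = k}
     = reach_count f k + (if Suc k \<le> f (Suc k) then 1 else 0)"
proof -
  let ?above = "{i. 1 \<le> i \<and> i \<le> k \<and> Suc k \<le> f i}"
  let ?at = "{i. 1 \<le> i \<and> i \<le> k \<and> f i = k}"
  have split_k: "{i. 1 \<le> i \<and> i \<le> k \<and> k \<le> f i} = ?above \<union> ?at" by auto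
  have k: "reach_count f k = card ?above + card ?at"
    unfolding reach_count_def split_k by (rule card_Un_disjoint) auto
  have split_Suc_k: "{i. 1 \<le> i \<and> i \<le> Suc k \<and> Suc k \<le> f i}
          = ?above \<union> (if Suc k \<le> f (Suc k) then {Suc k} else {})"
    by (auto simp: le_Suc_eq)
  have "reach_count f (Suc k) = card ?above + (if Suc k \<le> f (Suc k) then 1 else 0)"
    unfolding reach_count_def split_Suc_k by (subst card_Un_disjoint) auto
  with k show ?thesis by simp
qed

lemma reach_count_Suc_le: "reach_count f (Suc k) \<le> Suc (reach_count f k)"
  using reach_count_Suc[of f k] by (simp split: if_splits)

lemma reach_count_eq_self:
  assumes "\<And>i. 1 \<le> i \<Longrightarrow> i \<le> k \<Longrightarrow> k \<le> f i"
  shows "reach_count f k = k"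
proof -
  have "{i. 1 \<le> i \<and> i \<le> k \<and> k \<le> f i} = {1..k}" using assms by auto
  then show ?thesis by (simp add: reach_count_def)
qed

lemma reach_count_Suc_eq_Suc_iff:
  assumes step: "\<And>i. 1 \<le> i \<Longrightarrow> f (Suc i) \<le> Suc (f i)"
  shows "reach_count f (Suc k) = Suc (reach_count f k)
           \<longleftrightarrow> (\<forall>j. 1 \<le> j \<and> j \<le> Suc k \<longrightarrow> reach_count f j = j)"
proof
  assume "reach_count f (Suc k) = Suc (reach_count f k)"
  then have top: "Suc k \<le> f (Suc k)" and no_hit: "\<And>i. 1 \<le> i \<Longrightarrow> i \<le> k \<Longrightarrow> f i \<noteq> k"
    using reach_count_Suc[of f k] by (auto split: if_splits)
  have above: "Suc k \<le> f i" if "1 \<le> i" "i \<le> Suc k" for i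
    using \<open>i \<le> Suc k\<close>
  proof (induction i rule: inc_induct)
    case (step n)
    then show ?case using assms[of n] no_hit[of n] \<open>1 \<le> i\<close> by fastforce
  qed (rule top)
  show "\<forall>j. 1 \<le> j \<and> j \<le> Suc k \<longrightarrow> reach_count f j = j"
  proof (intro allI impI reach_count_eq_self)
    fix j i
    assume "1 \<le> j \<and> j \<le> Suc k" "1 \<le> i" "i \<le> j"
    then show "j \<le> f i" using above[of i] by simp
  qed
next
  assume "\<forall>j. 1 \<le> j \<and> j \<le> Suc k \<longrightarrow> reach_count f j = j"
  moreover have "reach_count f k = k"
    using calculation by (cases "k = 0") (auto simp: reach_count_def)
  ultimately show "reach_count f (Suc k) = Suc (reach_count f k)" by simp
qed

lemma reach_count_Suc_Suc_le:
  assumes step: "\<And>i. 1 \<le> i \<Longrightarrow> f (Suc i) \<le> Suc (f i)"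
    and descent: "reach_count f (Suc k) \<le> reach_count f k"
  shows "reach_count f (Suc (Suc k)) \<le> reach_count f (Suc k)"
proof (cases "Suc (Suc k) \<le> f (Suc (Suc k))")
  case False
  then show ?thesis using reach_count_Suc[of f "Suc k"] by simp
next
  case True
  then have "Suc k \<le> f (Suc k)" using step[of "Suc k"] by simp
  then have "reach_count f (Suc k) + card {i. 1 \<le> i \<and> i \<le> k \<and> f i = k}
               = Suc (reach_count f k)"
    using reach_count_Suc[of f k] by simp
  then have "card {i. 1 \<le> i \<and> i \<le> k \<and> f i = k} \<noteq> 0" using descent by linarith
  then obtain i where i: "1 \<le> i" "i \<le> k" "f i = k"
    by (metis (mono_tags, lifting) card.empty empty_Collect_eq)
  obtain j where "i \<le> j" "j \<le> Suc k" "f j = Suc k"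
    using nat_intermed_val_Suc_le[of i f "Suc k" "Suc k"] step i \<open>Suc k \<le> f (Suc k)\<close> by auto
  with i have "card {i. 1 \<le> i \<and> i \<le> Suc k \<and> f i = Suc k} \<noteq> 0" by auto
  moreover have "reach_count f (Suc (Suc k)) + card {i. 1 \<le> i \<and> i \<le> Suc k \<and> f i = Suc k}
                   = Suc (reach_count f (Suc k))"
    using reach_count_Suc[of f "Suc k"] True by simp
  ultimately show ?thesis by linarith
qed

theorem lemma2p1:
  fixes n :: nat and a :: "nat list" and k :: nat
  assumes "0 < n" and "a \<in> partitions n" and "1 \<le> k"
  shows "int (diag a (k + 1)) - int (diag a k) \<le> 1
         \<and> (int (diag a (k + 1)) - int (diag a k) = 1 \<longleftrightarrow>
              (\<forall>j. 1 \<le> j \<and> j \<le> k + 1 \<longrightarrow> diag a j = j))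
         \<and> (diag a k \<ge> diag a (k + 1) \<longrightarrow> diag a (k + 1) \<ge> diag a (k + 2))"
proof -
  define r where "r i = part a i + i - 1" for i
  have "sorted_wrt (\<ge>) a" using assms(2) by (simp add: partitions_def)
  then have step: "r (Suc i) \<le> Suc (r i)" if "1 \<le> i" for i
    using part_Suc_le[of a i] that by (simp add: r_def)
  have d: "diag a = reach_count r" by (simp add: diag_eq_reach_count r_def[abs_def])
  show ?thesis
    unfolding d using reach_count_Suc_le[of r k] reach_count_Suc_eq_Suc_iff[of r, OF step, of k]
      reach_count_Suc_Suc_le[of r, OF step, of k] by auto
qed

end
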